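(* Let $N=1$, $A_0,A_1\in\mathbb{C}^{n\times n}$, $u_0\in\mathbb{C}^n$, $t\ge0$, $\varepsilon\in\mathbb{C}$ and $k\ge1$. Then $$\Big\|u(t,\varepsilon)-\sum_{\ell=0}^{k-1}\varepsilon^\ell c_\ell(t)\Big\|\le\frac{e^{t(\mu(A_0)+|\varepsilon|\|A_1\|)}\,\big(|\varepsilon|\,\|tA_1\|\big)^k}{k!}\,\|u_0\|.$$
   Context: $\|\cdot\|$ is the Euclidean norm and induced spectral norm. $u(t,\varepsilon):=\exp(t(A_0+\varepsilon A_1))u_0=\sum_{\ell\ge0}\varepsilon^\ell c_\ell(t)$ is the Taylor expansion in $\varepsilon$. $\mu(B):=\max\Lambda((B+B^* )/2)$ is the logarithmic norm. *)

theory Defs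
  imports "HOL-Analysis.Analysis"
begin

text \<open>Complex n x n matrices are rendered as complex^'n^'n (n = CARD('n)),
  vectors of C^n as complex^'n (norm = Euclidean norm).\<close>

primrec mpow :: "complex^'n^'n \<Rightarrow> nat \<Rightarrow> complex^'n^'n" where
  "mpow M 0 = mat 1"
| "mpow M (Suc k) = M ** mpow M k"

definition mscale :: "complex \<Rightarrow> complex^'n^'n \<Rightarrow> complex^'n^'n" where
  "mscale c M = (\<chi> i j. c * M $ i $ j)"

definition mexp :: "complex^'n^'n \<Rightarrow> complex^'n^'n" where
  "mexp M = (\<Sum>k. mscale (1 / of_nat (fact k)) (mpow M k))"

definition mnorm :: "complex^'n^'n \<Rightarrow> real" where
  "mnorm M = onorm (\<lambda>x. M *v x)"

definition adjoint_mat :: "complex^'n^'n \<Rightarrow> complex^'n^'n" where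
  "adjoint_mat B = (\<chi> i j. cnj (B $ j $ i))"

text \<open>Logarithmic norm: largest eigenvalue of the Hermitian part (B + B^*)/2
  (whose eigenvalues are real).\<close>
definition lognorm :: "complex^'n^'n \<Rightarrow> real" where
  "lognorm B = Max {lam::real. \<exists>x. x \<noteq> 0 \<and>
      mscale (1/2) (B + adjoint_mat B) *v x = of_real lam *s x}"

definition usol :: "complex^'n^'n \<Rightarrow> complex^'n^'n \<Rightarrow> complex^'n \<Rightarrow> real \<Rightarrow> complex \<Rightarrow> complex^'n" where
  "usol A0 A1 u0 t \<epsilon> = mexp (mscale (of_real t) (A0 + mscale \<epsilon> A1)) *v u0"

definition taylor_coeff :: "complex^'n^'n \<Rightarrow> complex^'n^'n \<Rightarrow> complex^'n \<Rightarrow> real \<Rightarrow> nat \<Rightarrow> complex^'n" where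
  "taylor_coeff A0 A1 u0 t = (THE c. \<forall>\<epsilon>. (\<lambda>l. (\<epsilon> ^ l) *s c l) sums usol A0 A1 u0 t \<epsilon>)"

end

theory Submission
  imports Defs
begin

text \<open>Write \<open>B = A\<^sub>0 + \<epsilon> A\<^sub>1\<close>. The coefficients are the Duhamel iterates
  \<open>c\<^sub>0(t) = e\<^sup>t\<^sup>A\<^sup>0 u\<^sub>0\<close>, \<open>c\<^sub>l\<^sub>+\<^sub>1(t) = \<integral>\<^sub>0\<^sup>t e\<^sup>(\<^sup>t\<^sup>-\<^sup>s\<^sup>)\<^sup>A\<^sup>0 A\<^sub>1 c\<^sub>l(s) ds\<close>, and the
  remainder \<open>R\<^sub>k = u - \<Sum>\<^sub>l\<^sub><\<^sub>k \<epsilon>\<^sup>l c\<^sub>l\<close> solves \<open>R\<^sub>k' = B R\<^sub>k + \<epsilon>\<^sup>k A\<^sub>1 c\<^sub>k\<^sub>-\<^sub>1\<close>, \<open>R\<^sub>k(0) = 0\<close>.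
  A one-sided bound \<open>Re \<langle>C z, z\<rangle> \<le> \<nu> \<parallel>z\<parallel>\<^sup>2\<close> gives \<open>\<parallel>e\<^sup>s\<^sup>C\<parallel> \<le> e\<^sup>s\<^sup>\<nu>\<close> by an energy
  estimate; \<open>\<mu>(A\<^sub>0)\<close>, the top of the Rayleigh quotient of the Hermitian part, is such a bound
  for \<open>A\<^sub>0\<close>, and \<open>\<mu>(A\<^sub>0) + |\<epsilon>| \<parallel>A\<^sub>1\<parallel>\<close> for \<open>B\<close>. Variation of constants and induction then
  give \<open>\<parallel>c\<^sub>l(t)\<parallel> \<le> \<parallel>A\<^sub>1\<parallel>\<^sup>l t\<^sup>l/l! e\<^sup>t\<^sup>\<mu>\<^sup>(\<^sup>A\<^sup>0\<^sup>) \<parallel>u\<^sub>0\<parallel>\<close> and the claimed bound on \<open>R\<^sub>k(t)\<close>.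
  As the bound tends to \<open>0\<close>, \<open>\<Sum> \<epsilon>\<^sup>l c\<^sub>l(t) = u(t,\<epsilon>)\<close> for every \<open>\<epsilon>\<close>, so by uniqueness of
  power series coefficients the \<open>c\<^sub>l(t)\<close> are the Taylor coefficients.\<close>

section \<open>Bounded endomorphisms as a Banach algebra\<close>

text \<open>The library's \<open>exp\<close> needs a Banach algebra, but \<open>'a \<Rightarrow>\<^sub>L 'a\<close> carries no
  multiplication; \<open>'a endo\<close> is a copy of it with composition as product.\<close>

typedef (overloaded) ('a::real_normed_vector) endo = "UNIV :: ('a \<Rightarrow>\<^sub>L 'a) set"
  by simp

setup_lifting type_definition_endo

instantiation endo :: (real_normed_vector) real_normed_vector
begin
lift_definition norm_endo :: "'a endo \<Rightarrow> real" is norm .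
lift_definition minus_endo :: "'a endo \<Rightarrow> 'a endo \<Rightarrow> 'a endo" is "(-)" .
lift_definition plus_endo :: "'a endo \<Rightarrow> 'a endo \<Rightarrow> 'a endo" is "(+)" .
lift_definition uminus_endo :: "'a endo \<Rightarrow> 'a endo" is uminus .
lift_definition zero_endo :: "'a endo" is 0 .
lift_definition scaleR_endo :: "real \<Rightarrow> 'a endo \<Rightarrow> 'a endo" is scaleR .
definition dist_endo :: "'a endo \<Rightarrow> 'a endo \<Rightarrow> real" where
  "dist_endo F G = norm (F - G)"
definition uniformity_endo :: "('a endo \<times> 'a endo) filter" where
  "uniformity_endo = (INF e\<in>{0 <..}. principal {(x, y). dist x y < e})"
definition open_endo :: "'a endo set \<Rightarrow> bool" where
  "open_endo S = (\<forall>x\<in>S. \<forall>\<^sub>F (x', y) in uniformity. x' = x \<longrightarrow> y \<in> S)"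
definition sgn_endo :: "'a endo \<Rightarrow> 'a endo" where
  "sgn_endo F = inverse (norm F) *\<^sub>R F"
instance
  by standard
    (unfold dist_endo_def open_endo_def sgn_endo_def uniformity_endo_def,
     (rule refl | transfer, force simp: norm_triangle_ineq algebra_simps scaleR_add_right scaleR_add_left)+)
end

instantiation endo :: ("{real_normed_vector, perfect_space}") real_normed_algebra_1
begin
lift_definition times_endo :: "'a endo \<Rightarrow> 'a endo \<Rightarrow> 'a endo" is "(o\<^sub>L)" .
lift_definition one_endo :: "'a endo" is id_blinfun .
instance
proof
  show "norm (1 :: 'a endo) = 1"
    by transfer simp
  then show "(0 :: 'a endo) \<noteq> 1"
    by (metis norm_zero zero_neq_one)
  show "norm (F * G) \<le> norm F * norm G" for F G :: "'a endo"
    by transfer (rule norm_blinfun_compose)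
qed (transfer; rule blinfun_eqI; simp add: blinfun.bilinear_simps)+
end

instance endo :: (banach) banach
proof
  fix X :: "nat \<Rightarrow> 'a endo"
  assume "Cauchy X"
  then have "Cauchy (\<lambda>n. Rep_endo (X n))"
    by (simp add: Cauchy_def dist_endo_def dist_norm norm_endo.rep_eq minus_endo.rep_eq)
  then obtain L where "(\<lambda>n. Rep_endo (X n)) \<longlonglongrightarrow> L"
    using Cauchy_convergent_iff convergent_def by blast
  then have "X \<longlonglongrightarrow> Abs_endo L"
    by (simp add: tendsto_iff dist_endo_def dist_norm norm_endo.rep_eq minus_endo.rep_eq
        Abs_endo_inverse)
  then show "convergent X"
    by (auto simp: convergent_def)
qed

lift_definition endo_apply :: "'a::real_normed_vector endo \<Rightarrow> 'a \<Rightarrow> 'a" is blinfun_apply .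

lemma endo_eqI: "(\<And>x. endo_apply F x = endo_apply G x) \<Longrightarrow> F = G"
  by transfer (rule blinfun_eqI)

lemma endo_apply_mult [simp]: "endo_apply (F * G) x = endo_apply F (endo_apply G x)"
  by transfer simp

lemma endo_apply_one [simp]: "endo_apply 1 x = x"
  by transfer simp

lemma bounded_bilinear_endo_apply: "bounded_bilinear endo_apply"
proof
  fix F F' :: "'a endo" and x x' :: 'a and r :: real
  show "endo_apply (F + F') x = endo_apply F x + endo_apply F' x"
    by transfer (simp add: blinfun.bilinear_simps)
  show "endo_apply F (x + x') = endo_apply F x + endo_apply F x'"
    by transfer (simp add: blinfun.bilinear_simps)
  show "endo_apply (r *\<^sub>R F) x = r *\<^sub>R endo_apply F x"
    by transfer (simp add: blinfun.bilinear_simps)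
  show "endo_apply F (r *\<^sub>R x) = r *\<^sub>R endo_apply F x"
    by transfer (simp add: blinfun.bilinear_simps)
  show "\<exists>K. \<forall>F x. norm (endo_apply F x) \<le> norm F * norm x * K"
    by (rule exI[of _ 1], transfer) (simp add: norm_blinfun)
qed

interpretation endo_apply: bounded_bilinear endo_apply
  by (rule bounded_bilinear_endo_apply)

lemma norm_endo_apply_le: "norm (endo_apply F x) \<le> norm F * norm x"
  by transfer (rule norm_blinfun)

section \<open>Linear evolution equations with a one-sided bound\<close>

lemma has_vector_derivative_exp_scaleR_apply:
  fixes B :: "'a::{banach, perfect_space} endo" and x :: 'a
  shows "((\<lambda>r. endo_apply (exp (r *\<^sub>R B)) x) has_vector_derivative
      endo_apply B (endo_apply (exp (r *\<^sub>R B)) x)) (at r within S)"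
  using endo_apply.bounded_linear_left
    [THEN bounded_linear.has_vector_derivative,
     OF has_vector_derivative_at_within[OF exp_scaleR_has_vector_derivative_left]]
  by simp

text \<open>The energy \<open>e\<^sup>-\<^sup>2\<^sup>\<nu>\<^sup>r \<parallel>y r\<parallel>\<^sup>2\<close> of \<open>y r = e\<^sup>r\<^sup>B x\<close> is nonincreasing.\<close>

lemma norm_exp_scaleR_apply_le:
  fixes B :: "'a::{real_inner, banach, perfect_space} endo" and x :: 'a
  assumes dissipative: "\<And>z. endo_apply B z \<bullet> z \<le> \<nu> * (norm z)\<^sup>2" and "0 \<le> s"
  shows "norm (endo_apply (exp (s *\<^sub>R B)) x) \<le> exp (s * \<nu>) * norm x"
proof -
  define y where "y r = endo_apply (exp (r *\<^sub>R B)) x" for r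
  define f where "f r = exp (-2 * \<nu> * r) * (y r \<bullet> y r)" for r
  have "DERIV f r :> exp (-2 * \<nu> * r) * (2 * (endo_apply B (y r) \<bullet> y r) - 2 * \<nu> * (y r \<bullet> y r))"
    for r
  proof -
    have "((\<lambda>r. y r \<bullet> y r) has_vector_derivative
        y r \<bullet> endo_apply B (y r) + endo_apply B (y r) \<bullet> y r) (at r)"
      unfolding y_def
      by (rule bounded_bilinear.has_vector_derivative[OF bounded_bilinear_inner]
          has_vector_derivative_exp_scaleR_apply)+
    then have "((\<lambda>r. y r \<bullet> y r) has_real_derivative 2 * (endo_apply B (y r) \<bullet> y r)) (at r)"
      by (simp add: has_real_derivative_iff_has_vector_derivative inner_commute)
    then show ?thesis
      unfolding f_def by (auto intro!: derivative_eq_intros simp: algebra_simps)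
  qed
  moreover have "endo_apply B (y r) \<bullet> y r \<le> \<nu> * (y r \<bullet> y r)" for r
    using dissipative[of "y r"] by (simp add: power2_norm_eq_inner)
  ultimately have "f s \<le> f 0"
    by (intro DERIV_nonpos_imp_nonincreasing[OF \<open>0 \<le> s\<close>])
      (fastforce simp: mult_nonneg_nonpos)
  then have "(norm (y s))\<^sup>2 \<le> exp (2 * \<nu> * s) * (norm x)\<^sup>2"
    by (simp add: f_def y_def power2_norm_eq_inner[symmetric] exp_minus field_simps)
  also have "\<dots> = (exp (s * \<nu>) * norm x)\<^sup>2"
    by (simp add: power_mult_distrib power2_eq_square mult_ac flip: exp_add)
  finally show ?thesis
    unfolding y_def by (rule power2_le_imp_le) simp
qed

lemma has_integral_power_div_fact:
  fixes T :: real
  assumes "0 \<le> T"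
  shows "((\<lambda>s. s ^ j / fact j) has_integral T ^ Suc j / fact (Suc j)) {0..T}"
proof -
  have "((\<lambda>s. s ^ Suc j / fact (Suc j)) has_real_derivative s ^ j / fact j) (at s within {0..T})"
    for s :: real
    using DERIV_cdivide[OF DERIV_pow[of "Suc j" s "{0..T}"], of "fact (Suc j)"]
    by (simp add: fact_Suc)
  then show ?thesis
    using fundamental_theorem_of_calculus[OF assms, of "\<lambda>s. s ^ Suc j / fact (Suc j)"]
    by (simp add: has_real_derivative_iff_has_vector_derivative)
qed

text \<open>Variation of constants: \<open>y T = \<integral>\<^sub>0\<^sup>T e\<^sup>(\<^sup>T\<^sup>-\<^sup>s\<^sup>)\<^sup>B f s ds\<close>, since
  \<open>s \<mapsto> e\<^sup>(\<^sup>T\<^sup>-\<^sup>s\<^sup>)\<^sup>B y s\<close> has derivative \<open>e\<^sup>(\<^sup>T\<^sup>-\<^sup>s\<^sup>)\<^sup>B f s\<close>.\<close>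

lemma norm_variation_of_constants_le:
  fixes B :: "'a::{real_inner, banach, perfect_space} endo" and y f :: "real \<Rightarrow> 'a"
  assumes dissipative: "\<And>z. endo_apply B z \<bullet> z \<le> \<nu> * (norm z)\<^sup>2" and "0 \<le> T"
    and y': "\<And>s. s \<in> {0..T} \<Longrightarrow>
      (y has_vector_derivative endo_apply B (y s) + f s) (at s within {0..T})"
    and "y 0 = 0"
    and f_le: "\<And>s. s \<in> {0..T} \<Longrightarrow> norm (f s) \<le> K * exp (s * \<nu>) * s ^ j / fact j"
  shows "norm (y T) \<le> K * exp (T * \<nu>) * T ^ Suc j / fact (Suc j)"
proof -
  define E where "E s = exp ((T - s) *\<^sub>R B)" for s
  have "((\<lambda>s. endo_apply (E s) (y s)) has_vector_derivative endo_apply (E s) (f s))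
      (at s within {0..T})" if "s \<in> {0..T}" for s
  proof -
    have "((\<lambda>r. exp (r *\<^sub>R B)) \<circ> (\<lambda>s. T - s) has_vector_derivative
        (-1) *\<^sub>R (exp ((T - s) *\<^sub>R B) * B)) (at s)"
      by (rule vector_diff_chain_at)
        (auto intro!: derivative_eq_intros exp_scaleR_has_vector_derivative_right)
    then have "(E has_vector_derivative - (E s * B)) (at s within {0..T})"
      unfolding E_def[abs_def] by (simp add: o_def has_vector_derivative_at_within)
    from endo_apply.has_vector_derivative[OF this y'[OF that]] show ?thesis
      by (simp add: endo_apply.add_right endo_apply.minus_left)
  qed
  then have int_y: "((\<lambda>s. endo_apply (E s) (f s)) has_integral y T) {0..T}"
    using fundamental_theorem_of_calculus[OF \<open>0 \<le> T\<close>] \<open>y 0 = 0\<close>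
    by (fastforce simp: E_def endo_apply.zero_right)
  moreover have int_bound: "((\<lambda>s. K * exp (T * \<nu>) * (s ^ j / fact j)) has_integral
      K * exp (T * \<nu>) * (T ^ Suc j / fact (Suc j))) {0..T}"
    by (intro has_integral_mult_right has_integral_power_div_fact \<open>0 \<le> T\<close>)
  moreover have "norm (endo_apply (E s) (f s)) \<le> K * exp (T * \<nu>) * (s ^ j / fact j)"
    if "s \<in> {0..T}" for s
  proof -
    have "norm (endo_apply (E s) (f s)) \<le> exp ((T - s) * \<nu>) * norm (f s)"
      unfolding E_def by (rule norm_exp_scaleR_apply_le[OF dissipative]) (use that in auto)
    also have "\<dots> \<le> exp ((T - s) * \<nu>) * (K * exp (s * \<nu>) * s ^ j / fact j)"
      by (intro mult_left_mono f_le that) simp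
    also have "\<dots> = K * exp (T * \<nu>) * (s ^ j / fact j)"
      by (simp add: algebra_simps flip: exp_add)
    finally show ?thesis .
  qed
  ultimately have "norm (integral {0..T} (\<lambda>s. endo_apply (E s) (f s)))
      \<le> integral {0..T} (\<lambda>s. K * exp (T * \<nu>) * (s ^ j / fact j))"
    by (blast intro: integral_norm_bound_integral has_integral_integrable)
  then have "norm (y T) \<le> K * exp (T * \<nu>) * (T ^ Suc j / fact (Suc j))"
    by (simp only: integral_unique[OF int_y] integral_unique[OF int_bound])
  then show ?thesis
    by simp
qed

section \<open>Matrices as endomorphisms\<close>

lemma summable_vecI:
  fixes f :: "nat \<Rightarrow> 'a::real_normed_vector ^ 'n"
  assumes "\<And>i. summable (\<lambda>k. f k $ i)"
  shows "summable f"
proof -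
  have "f sums (\<chi> i. \<Sum>k. f k $ i)"
    unfolding sums_def
    by (rule vec_tendstoI) (simp add: summable_LIMSEQ assms)
  then show ?thesis
    by (rule sums_summable)
qed

lemma of_real_smult_eq_scaleR: "complex_of_real r *s x = r *\<^sub>R x"
  by (simp add: vec_eq_iff scaleR_conv_of_real[where 'a=complex])

lemma mscale_matrix_vector_mult: "mscale c M *v x = c *s (M *v x)"
  by (simp add: mscale_def matrix_vector_mult_def vec_eq_iff sum_distrib_left mult.assoc)

lift_definition endo_of_matrix :: "complex ^ 'n ^ 'n \<Rightarrow> (complex ^ 'n) endo"
  is "\<lambda>M. Blinfun ((*v) M)" .

lemma endo_apply_endo_of_matrix [simp]: "endo_apply (endo_of_matrix M) x = M *v x"
  by transfer (simp add: bounded_linear_Blinfun_apply)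

lemma norm_endo_of_matrix: "norm (endo_of_matrix M) = mnorm M"
  by transfer (simp add: mnorm_def norm_blinfun.rep_eq bounded_linear_Blinfun_apply)

lemma mnorm_nonneg: "0 \<le> mnorm M"
  by (metis norm_endo_of_matrix norm_ge_zero)

lemma norm_matrix_vector_mult_le: "norm (M *v x) \<le> mnorm M * norm x"
  by (metis endo_apply_endo_of_matrix norm_endo_apply_le norm_endo_of_matrix)

lemma endo_of_matrix_mpow: "endo_of_matrix (mpow M k) = endo_of_matrix M ^ k"
proof (induction k)
  case (Suc k)
  have "endo_of_matrix (M ** N) = endo_of_matrix M * endo_of_matrix N" for N
    by (rule endo_eqI) (simp add: matrix_vector_mul_assoc)
  with Suc show ?case
    by simp
qed (auto intro: endo_eqI)

lemma endo_of_matrix_mscale_of_real: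
  "endo_of_matrix (mscale (complex_of_real t) M) = t *\<^sub>R endo_of_matrix M"
  by (rule endo_eqI) (simp add: mscale_matrix_vector_mult of_real_smult_eq_scaleR endo_apply.scaleR_left)

lemma mnorm_mscale_of_real: "mnorm (mscale (complex_of_real t) M) = \<bar>t\<bar> * mnorm M"
  by (simp flip: norm_endo_of_matrix add: endo_of_matrix_mscale_of_real)

text \<open>Applied to unit vectors, the convergence of the exponential series in the Banach algebra
  gives the summability of the matrix series defining \<open>mexp\<close>.\<close>

lemma mexp_matrix_vector_mult:
  fixes M :: "complex ^ 'n ^ 'n"
  shows "mexp M *v x = endo_apply (exp (endo_of_matrix M)) x"
proof -
  define S where "S k = mscale (1 / of_nat (fact k)) (mpow M k)" for k
  have S_apply: "(\<lambda>k. S k *v x) sums endo_apply (exp (endo_of_matrix M)) x" for x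
  proof -
    have "S k *v x = endo_apply (endo_of_matrix M ^ k /\<^sub>R fact k) x" for k
      by (simp add: S_def mscale_matrix_vector_mult endo_apply.scaleR_left flip: endo_of_matrix_mpow)
        (simp add: vec_eq_iff scaleR_conv_of_real[where 'a=complex] divide_inverse)
    then show ?thesis
      using endo_apply.bounded_linear_left[THEN bounded_linear.sums, OF exp_converges] by simp
  qed
  have "summable S"
  proof (intro summable_vecI)
    fix i j
    have "S k $ i $ j = (S k *v axis j 1) $ i" for k
      by (simp add: matrix_vector_mult_def axis_def if_distrib cong: if_cong)
    then show "summable (\<lambda>k. S k $ i $ j)"
      using sums_vec_nth[OF S_apply] by (simp add: sums_iff)
  qed
  then have "S sums mexp M"
    by (simp add: mexp_def S_def[abs_def] summable_sums)
  moreover have "bounded_linear (\<lambda>N :: complex ^ 'n ^ 'n. N *v x)"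
    by (auto simp: linear_conv_bounded_linear[symmetric] linear_iff vec_eq_iff
        matrix_vector_mult_def sum.distrib scaleR_sum_right distrib_right)
  ultimately have "(\<lambda>k. S k *v x) sums (mexp M *v x)"
    by (rule bounded_linear.sums[rotated])
  with S_apply show ?thesis
    by (rule sums_unique2[symmetric])
qed

section \<open>The logarithmic norm\<close>

lemma linear_plus_quadratic_nonpos_imp_zero:
  fixes a b :: real
  assumes "\<And>s. s * a + s\<^sup>2 * b \<le> 0"
  shows "a = 0"
proof (rule ccontr)
  assume "a \<noteq> 0"
  define d where "d = 1 + \<bar>b\<bar>"
  have "d > 0" and "d + b > 0"
    by (auto simp: d_def)
  have "(a / d) * a + (a / d)\<^sup>2 * b = a\<^sup>2 * (d + b) / d\<^sup>2"
    using \<open>d > 0\<close> by (simp add: field_simps power2_eq_square)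
  also have "\<dots> > 0"
    using \<open>a \<noteq> 0\<close> \<open>d > 0\<close> \<open>d + b > 0\<close> by simp
  finally show False
    using assms[of "a / d"] by simp
qed

lemma selfadjoint_eigenvalues_finite:
  fixes H :: "'a::euclidean_space \<Rightarrow> 'a"
  assumes selfadjoint: "\<And>x y. H x \<bullet> y = x \<bullet> H y"
  shows "finite {c. \<exists>x. x \<noteq> 0 \<and> H x = c *\<^sub>R x}" (is "finite ?E")
proof -
  define v where "v c = (SOME x. x \<noteq> 0 \<and> H x = c *\<^sub>R x)" for c
  have v: "v c \<noteq> 0" "H (v c) = c *\<^sub>R v c" if "c \<in> ?E" for c
    using someI_ex[OF that[simplified]] by (simp_all add: v_def)
  have "inj_on v ?E"
  proof (rule inj_onI)
    fix c c' assume "c \<in> ?E" "c' \<in> ?E" and eq: "v c = v c'"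
    have "c *\<^sub>R v c = H (v c)"
      using v(2)[OF \<open>c \<in> ?E\<close>] by simp
    also have "\<dots> = c' *\<^sub>R v c"
      using v(2)[OF \<open>c' \<in> ?E\<close>] eq by simp
    finally show "c = c'"
      using v(1)[OF \<open>c \<in> ?E\<close>] by simp
  qed
  have "pairwise orthogonal (v ` ?E)"
  proof (rule pairwise_imageI)
    fix c c' assume "c \<in> ?E" "c' \<in> ?E" "c \<noteq> c'"
    have "c * (v c \<bullet> v c') = c' * (v c \<bullet> v c')"
      using selfadjoint[of "v c" "v c'"] v(2)[OF \<open>c \<in> ?E\<close>] v(2)[OF \<open>c' \<in> ?E\<close>] by simp
    with \<open>c \<noteq> c'\<close> show "orthogonal (v c) (v c')"
      by (simp add: orthogonal_def)
  qed
  moreover have "0 \<notin> v ` ?E"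
  proof
    assume "0 \<in> v ` ?E"
    then obtain c where "c \<in> ?E" and "0 = v c"
      by (rule imageE)
    with v(1)[OF \<open>c \<in> ?E\<close>] show False
      by simp
  qed
  ultimately have "independent (v ` ?E)"
    by (rule pairwise_orthogonal_independent)
  from finite_imageD[OF finiteI_independent[OF this] \<open>inj_on v ?E\<close>] show ?thesis .
qed

text \<open>A maximiser \<open>y\<close> of the Rayleigh quotient on the unit sphere is an eigenvector: comparing
  \<open>y\<close> with \<open>y + s z\<close> for all real \<open>s\<close> forces \<open>(H y - m y) \<bullet> z = 0\<close>.\<close>

lemma selfadjoint_rayleigh_max:
  fixes H :: "'a::euclidean_space \<Rightarrow> 'a"
  assumes "linear H" and selfadjoint: "\<And>x y. H x \<bullet> y = x \<bullet> H y"
  obtains y m where "y \<noteq> 0" and "H y = m *\<^sub>R y" and "\<And>x. H x \<bullet> x \<le> m * (norm x)\<^sup>2"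
proof -
  have "continuous_on (sphere 0 1) (\<lambda>x. H x \<bullet> x)"
    using \<open>linear H\<close>
    by (intro continuous_intros linear_continuous_on) (simp add: linear_conv_bounded_linear)
  moreover have "sphere (0::'a) 1 \<noteq> {}"
    by simp
  ultimately obtain y where y: "y \<in> sphere 0 1"
    and max: "\<And>z. z \<in> sphere 0 1 \<Longrightarrow> H z \<bullet> z \<le> H y \<bullet> y"
    using continuous_attains_sup[OF compact_sphere] by blast
  define m where "m = H y \<bullet> y"
  have le: "H x \<bullet> x \<le> m * (norm x)\<^sup>2" for x
  proof (cases "x = 0")
    case False
    then have "H (x /\<^sub>R norm x) \<bullet> (x /\<^sub>R norm x) \<le> m"
      unfolding m_def by (intro max) simp
    with False show ?thesis
      by (simp add: linear_scale[OF \<open>linear H\<close>] field_simps power2_eq_square)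
  qed (simp add: linear_0[OF \<open>linear H\<close>])
  have "y \<bullet> y = 1"
    using y by (simp add: dot_square_norm)
  have "(H y - m *\<^sub>R y) \<bullet> z = 0" for z
  proof -
    have "s * (2 * ((H y - m *\<^sub>R y) \<bullet> z)) + s\<^sup>2 * (H z \<bullet> z - m * (z \<bullet> z)) \<le> 0" for s
    proof -
      have "H (y + s *\<^sub>R z) = H y + s *\<^sub>R H z"
        by (simp add: linear_add[OF \<open>linear H\<close>] linear_scale[OF \<open>linear H\<close>])
      moreover have "H z \<bullet> y = H y \<bullet> z"
        using selfadjoint[of z y] by (simp add: inner_commute)
      ultimately have "H (y + s *\<^sub>R z) \<bullet> (y + s *\<^sub>R z) = m + 2 * s * (H y \<bullet> z) + s\<^sup>2 * (H z \<bullet> z)"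
        by (simp add: m_def inner_add_left inner_add_right power2_eq_square algebra_simps)
      moreover have "(norm (y + s *\<^sub>R z))\<^sup>2 = 1 + 2 * s * (y \<bullet> z) + s\<^sup>2 * (z \<bullet> z)"
        unfolding power2_norm_eq_inner using \<open>y \<bullet> y = 1\<close>
        by (simp add: inner_add_left inner_add_right inner_commute[of z y] power2_eq_square algebra_simps)
      ultimately show ?thesis
        using le[of "y + s *\<^sub>R z"] by (simp add: inner_diff_left algebra_simps)
    qed
    then show ?thesis
      using linear_plus_quadratic_nonpos_imp_zero by fastforce
  qed
  from this[of "H y - m *\<^sub>R y"] y show ?thesis
    by (intro that[of y m]) (auto simp: le)
qed

lemma inner_complex_eq_Re_mult_cnj: "(a::complex) \<bullet> b = Re (a * cnj b)"
  by (simp add: inner_complex_def)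

lemma inner_matrix_vector_mult_adjoint: "(M *v x) \<bullet> y = x \<bullet> (adjoint_mat M *v y)"
proof -
  have "(M *v x) \<bullet> y = Re (\<Sum>i\<in>UNIV. \<Sum>j\<in>UNIV. M $ i $ j * x $ j * cnj (y $ i))"
    by (simp add: inner_vec_def inner_complex_eq_Re_mult_cnj matrix_vector_mult_def
        sum_distrib_right Re_sum)
  also have "\<dots> = Re (\<Sum>j\<in>UNIV. \<Sum>i\<in>UNIV. M $ i $ j * x $ j * cnj (y $ i))"
    by (subst sum.swap) (rule refl)
  also have "\<dots> = x \<bullet> (adjoint_mat M *v y)"
    by (simp add: inner_vec_def inner_complex_eq_Re_mult_cnj matrix_vector_mult_def adjoint_mat_def
        sum_distrib_left Re_sum mult_ac)
  finally show ?thesis .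
qed

lemma adjoint_mat_adjoint_mat [simp]: "adjoint_mat (adjoint_mat M) = M"
  by (simp add: adjoint_mat_def vec_eq_iff)

text \<open>On \<open>complex ^ 'n\<close>, \<open>x \<bullet> y\<close> is the real part of the Hermitian product, so
  \<open>(A *v x) \<bullet> x\<close> is the quadratic form of the Hermitian part of \<open>A\<close>.\<close>

lemma lognorm_ge_inner:
  fixes A :: "complex ^ 'n ^ 'n"
  shows "(A *v x) \<bullet> x \<le> lognorm A * (norm x)\<^sup>2"
proof -
  define H where "H = mscale (1/2) (A + adjoint_mat A)"
  have H_apply: "H *v x = (1/2) *\<^sub>R (A *v x + adjoint_mat A *v x)" for x
    using of_real_smult_eq_scaleR[of "1/2" "A *v x"] of_real_smult_eq_scaleR[of "1/2" "adjoint_mat A *v x"]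
    by (simp add: H_def mscale_matrix_vector_mult matrix_vector_mult_add_rdistrib scaleR_add_right)
  have adjoint_apply: "(adjoint_mat A *v x) \<bullet> y = x \<bullet> (A *v y)" for x y
    using inner_matrix_vector_mult_adjoint[of "adjoint_mat A" x y] by simp
  have selfadjoint: "(H *v x) \<bullet> y = x \<bullet> (H *v y)" for x y
    by (simp add: H_apply inner_add_left inner_add_right inner_matrix_vector_mult_adjoint
        adjoint_apply)
  have quadratic_form: "(H *v x) \<bullet> x = (A *v x) \<bullet> x" for x
    by (simp add: H_apply inner_add_left adjoint_apply inner_commute[of x])
  obtain y m where "y \<noteq> 0" "H *v y = m *\<^sub>R y" and le: "\<And>x. (H *v x) \<bullet> x \<le> m * (norm x)\<^sup>2"
    using selfadjoint_rayleigh_max[of "(*v) H"] selfadjoint by auto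
  have "finite {c. \<exists>x. x \<noteq> 0 \<and> H *v x = c *\<^sub>R x}"
    using selfadjoint_eigenvalues_finite[of "(*v) H"] selfadjoint by simp
  with \<open>y \<noteq> 0\<close> \<open>H *v y = m *\<^sub>R y\<close> have "m \<le> lognorm A"
    unfolding lognorm_def H_def[symmetric] of_real_smult_eq_scaleR by (auto intro: Max_ge)
  then have "m * (norm x)\<^sup>2 \<le> lognorm A * (norm x)\<^sup>2"
    by (simp add: mult_right_mono)
  then show ?thesis
    using le[of x] quadratic_form[of x] by simp
qed

section \<open>Taylor coefficients in the perturbation parameter\<close>

lemma norm_smult_vec: "norm (c *s (v :: complex ^ 'n)) = cmod c * norm v"
  unfolding norm_vec_def by (simp add: L2_set_right_distrib norm_mult)

lemma inner_endo_of_matrix_le_lognorm: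
  "endo_apply (endo_of_matrix A) z \<bullet> z \<le> lognorm A * (norm z)\<^sup>2"
  by (simp add: lognorm_ge_inner)

lemma inner_endo_of_matrix_le_lognorm_plus_mnorm:
  "endo_apply (endo_of_matrix (A0 + mscale \<epsilon> A1)) z \<bullet> z
    \<le> (lognorm A0 + cmod \<epsilon> * mnorm A1) * (norm z)\<^sup>2"
proof -
  have "(\<epsilon> *s (A1 *v z)) \<bullet> z \<le> cmod \<epsilon> * norm (A1 *v z) * norm z"
    using norm_cauchy_schwarz[of "\<epsilon> *s (A1 *v z)" z] by (simp add: norm_smult_vec)
  also have "\<dots> \<le> cmod \<epsilon> * (mnorm A1 * norm z) * norm z"
    by (intro mult_right_mono mult_left_mono norm_matrix_vector_mult_le) auto
  also have "\<dots> = cmod \<epsilon> * mnorm A1 * (norm z)\<^sup>2"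
    by (simp add: power2_eq_square)
  finally show ?thesis
    using lognorm_ge_inner[of A0 z]
    by (simp add: matrix_vector_mult_add_rdistrib mscale_matrix_vector_mult inner_add_left
        algebra_simps)
qed

lemma usol_eq_endo_apply_exp:
  "usol A0 A1 u0 t \<epsilon> = endo_apply (exp (t *\<^sub>R endo_of_matrix (A0 + mscale \<epsilon> A1))) u0"
  by (simp add: usol_def mexp_matrix_vector_mult endo_of_matrix_mscale_of_real)

text \<open>The factor \<open>e\<^sup>t\<^sup>A\<^sup>0\<close> of \<open>c\<^sub>l\<^sub>+\<^sub>1(t) = \<integral>\<^sub>0\<^sup>t e\<^sup>(\<^sup>t\<^sup>-\<^sup>s\<^sup>)\<^sup>A\<^sup>0 A\<^sub>1 c\<^sub>l(s) ds\<close> is pulled out of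
  the integral, so that the integrand does not depend on \<open>t\<close>.\<close>

primrec duhamel_coeff ::
  "complex ^ 'n ^ 'n \<Rightarrow> complex ^ 'n ^ 'n \<Rightarrow> complex ^ 'n \<Rightarrow> nat \<Rightarrow> real \<Rightarrow> complex ^ 'n"
where
  "duhamel_coeff A0 A1 u0 0 t = endo_apply (exp (t *\<^sub>R endo_of_matrix A0)) u0"
| "duhamel_coeff A0 A1 u0 (Suc l) t = endo_apply (exp (t *\<^sub>R endo_of_matrix A0))
      (integral {0..t} (\<lambda>s. endo_apply (exp (s *\<^sub>R - endo_of_matrix A0))
        (A1 *v duhamel_coeff A0 A1 u0 l s)))"

lemma duhamel_coeff_Suc_0 [simp]: "duhamel_coeff A0 A1 u0 (Suc l) 0 = 0"
  by (simp add: endo_apply.zero_right)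

lemma has_vector_derivative_duhamel_coeff:
  assumes "t \<in> {0..T}"
  shows "(duhamel_coeff A0 A1 u0 l has_vector_derivative
      A0 *v duhamel_coeff A0 A1 u0 l t + (if l = 0 then 0 else A1 *v duhamel_coeff A0 A1 u0 (l - 1) t))
    (at t within {0..T})"
  using assms
proof (induction l arbitrary: t)
  case 0
  show ?case
    using has_vector_derivative_exp_scaleR_apply[of "endo_of_matrix A0" u0 t "{0..T}"]
    by (simp add: duhamel_coeff.simps(1)[abs_def])
next
  case (Suc l)
  let ?B = "endo_of_matrix A0"
  define h where "h s = endo_apply (exp (s *\<^sub>R - ?B)) (A1 *v duhamel_coeff A0 A1 u0 l s)" for s
  have "continuous_on {0..T} (\<lambda>s. exp (s *\<^sub>R - ?B))"
    by (rule continuous_on_vector_derivative) (rule exp_scaleR_has_vector_derivative_right)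
  moreover have "continuous_on {0..T} (duhamel_coeff A0 A1 u0 l)"
    using Suc.IH by (rule continuous_on_vector_derivative)
  ultimately have "continuous_on {0..T} h"
    unfolding h_def
    by (intro endo_apply.continuous_on bounded_linear.continuous_on[OF matrix_vector_mul_bounded_linear])
  then have "((\<lambda>t. integral {0..t} h) has_vector_derivative h t) (at t within {0..T})"
    using Suc.prems by (rule integral_has_vector_derivative)
  from endo_apply.has_vector_derivative
    [OF has_vector_derivative_at_within[OF exp_scaleR_has_vector_derivative_left] this]
  have "((\<lambda>t. endo_apply (exp (t *\<^sub>R ?B)) (integral {0..t} h)) has_vector_derivative
      endo_apply (exp (t *\<^sub>R ?B)) (h t) + endo_apply (?B * exp (t *\<^sub>R ?B)) (integral {0..t} h))
      (at t within {0..T})" .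
  moreover have "endo_apply (exp (t *\<^sub>R ?B)) (h t) = A1 *v duhamel_coeff A0 A1 u0 l t"
    using exp_minus_inverse[of "t *\<^sub>R ?B"] by (simp add: h_def flip: endo_apply_mult)
  ultimately show ?case
    by (simp add: h_def[abs_def] duhamel_coeff.simps(2)[abs_def] add.commute)
qed

lemma norm_duhamel_coeff_le:
  assumes "0 \<le> t"
  shows "norm (duhamel_coeff A0 A1 u0 l t)
    \<le> mnorm A1 ^ l * norm u0 * exp (t * lognorm A0) * t ^ l / fact l"
  using assms
proof (induction l arbitrary: t)
  case 0
  show ?case
    using norm_exp_scaleR_apply_le[OF inner_endo_of_matrix_le_lognorm 0, of A0 u0]
    by (simp add: mult_ac)
next
  case (Suc l)
  show ?case
  proof (rule norm_variation_of_constants_le[where f = "\<lambda>s. A1 *v duhamel_coeff A0 A1 u0 l s"])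
    fix s assume s: "s \<in> {0..t}"
    show "(duhamel_coeff A0 A1 u0 (Suc l) has_vector_derivative
        endo_apply (endo_of_matrix A0) (duhamel_coeff A0 A1 u0 (Suc l) s) + A1 *v duhamel_coeff A0 A1 u0 l s)
        (at s within {0..t})"
      using has_vector_derivative_duhamel_coeff[OF s, of A0 A1 u0 "Suc l"] by simp
    have "norm (A1 *v duhamel_coeff A0 A1 u0 l s) \<le> mnorm A1 * norm (duhamel_coeff A0 A1 u0 l s)"
      by (rule norm_matrix_vector_mult_le)
    also have "\<dots> \<le> mnorm A1 * (mnorm A1 ^ l * norm u0 * exp (s * lognorm A0) * s ^ l / fact l)"
      using s by (intro mult_left_mono Suc.IH mnorm_nonneg) auto
    finally show "norm (A1 *v duhamel_coeff A0 A1 u0 l s)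
        \<le> mnorm A1 ^ Suc l * norm u0 * exp (s * lognorm A0) * s ^ l / fact l"
      by (simp add: mult_ac)
  qed (use Suc.prems inner_endo_of_matrix_le_lognorm in auto)
qed

definition taylor_remainder ::
  "complex ^ 'n ^ 'n \<Rightarrow> complex ^ 'n ^ 'n \<Rightarrow> complex ^ 'n \<Rightarrow> complex \<Rightarrow> nat \<Rightarrow> real \<Rightarrow> complex ^ 'n"
where
  "taylor_remainder A0 A1 u0 \<epsilon> k t =
    usol A0 A1 u0 t \<epsilon> - (\<Sum>l<k. \<epsilon> ^ l *s duhamel_coeff A0 A1 u0 l t)"

lemma taylor_remainder_Suc_0: "taylor_remainder A0 A1 u0 \<epsilon> (Suc k) 0 = 0"
  by (simp add: taylor_remainder_def usol_eq_endo_apply_exp sum.lessThan_Suc_shift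
      del: sum.lessThan_Suc)

lemma has_vector_derivative_taylor_remainder:
  assumes "s \<in> {0..T}"
  shows "(taylor_remainder A0 A1 u0 \<epsilon> k has_vector_derivative
      endo_apply (endo_of_matrix (A0 + mscale \<epsilon> A1)) (taylor_remainder A0 A1 u0 \<epsilon> k s)
      + (if k = 0 then 0 else \<epsilon> ^ k *s (A1 *v duhamel_coeff A0 A1 u0 (k - 1) s)))
    (at s within {0..T})"
proof (induction k)
  case 0
  show ?case
    using has_vector_derivative_exp_scaleR_apply[of "endo_of_matrix (A0 + mscale \<epsilon> A1)" u0 s "{0..T}"]
    by (simp add: taylor_remainder_def[abs_def] usol_eq_endo_apply_exp)
next
  case (Suc k)
  let ?c = "duhamel_coeff A0 A1 u0" and ?R = "taylor_remainder A0 A1 u0 \<epsilon>"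
  have R_Suc: "?R (Suc k) = (\<lambda>s. ?R k s - \<epsilon> ^ k *s ?c k s)"
    by (simp add: taylor_remainder_def[abs_def] algebra_simps)
  have "bounded_linear (\<lambda>v::complex ^ 'n. \<epsilon> ^ k *s v)"
    by (simp add: linear_conv_bounded_linear[symmetric] linear_iff vec_eq_iff
        scaleR_conv_of_real[where 'a=complex] algebra_simps)
  from has_vector_derivative_diff[OF Suc.IH bounded_linear.has_vector_derivative[OF this
      has_vector_derivative_duhamel_coeff[OF assms, of A0 A1 u0 k]]]
  show ?case
    unfolding R_Suc
    by (rule has_vector_derivative_eq_rhs)
      (cases k; simp add: matrix_vector_mult_add_rdistrib mscale_matrix_vector_mult vec_eq_iff
        vector_scalar_commute matrix_vector_mult_diff_distrib algebra_simps)
qed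

lemma norm_taylor_remainder_le:
  assumes "0 \<le> T"
  shows "norm (taylor_remainder A0 A1 u0 \<epsilon> (Suc j) T)
    \<le> (cmod \<epsilon> * mnorm A1) ^ Suc j * norm u0 * exp (T * (lognorm A0 + cmod \<epsilon> * mnorm A1))
      * T ^ Suc j / fact (Suc j)"
proof (rule norm_variation_of_constants_le[OF inner_endo_of_matrix_le_lognorm_plus_mnorm assms,
      where f = "\<lambda>s. \<epsilon> ^ Suc j *s (A1 *v duhamel_coeff A0 A1 u0 j s)"])
  fix s :: real assume "s \<in> {0..T}"
  then show "(taylor_remainder A0 A1 u0 \<epsilon> (Suc j) has_vector_derivative
      endo_apply (endo_of_matrix (A0 + mscale \<epsilon> A1)) (taylor_remainder A0 A1 u0 \<epsilon> (Suc j) s)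
      + \<epsilon> ^ Suc j *s (A1 *v duhamel_coeff A0 A1 u0 j s)) (at s within {0..T})"
    using has_vector_derivative_taylor_remainder[of s T A0 A1 u0 \<epsilon> "Suc j"] by simp
next
  fix s :: real assume "s \<in> {0..T}"
  let ?\<nu> = "lognorm A0 + cmod \<epsilon> * mnorm A1"
  have "norm (\<epsilon> ^ Suc j *s (A1 *v duhamel_coeff A0 A1 u0 j s))
      \<le> cmod \<epsilon> ^ Suc j * (mnorm A1 * norm (duhamel_coeff A0 A1 u0 j s))"
    by (simp add: norm_smult_vec norm_mult norm_power mult_left_mono norm_matrix_vector_mult_le)
  also have "\<dots> \<le> cmod \<epsilon> ^ Suc j * (mnorm A1 * (mnorm A1 ^ j * norm u0 * exp (s * ?\<nu>) * s ^ j / fact j))"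
  proof -
    have "exp (s * lognorm A0) \<le> exp (s * ?\<nu>)"
      using \<open>s \<in> {0..T}\<close> mnorm_nonneg[of A1] by (simp add: algebra_simps)
    then have "mnorm A1 ^ j * norm u0 * exp (s * lognorm A0) * s ^ j / fact j
        \<le> mnorm A1 ^ j * norm u0 * exp (s * ?\<nu>) * s ^ j / fact j"
      using \<open>s \<in> {0..T}\<close> mnorm_nonneg[of A1]
      by (intro divide_right_mono mult_right_mono mult_left_mono) auto
    with norm_duhamel_coeff_le[of s A0 A1 u0 j] \<open>s \<in> {0..T}\<close> show ?thesis
      by (intro mult_left_mono mnorm_nonneg) auto
  qed
  also have "\<dots> = (cmod \<epsilon> * mnorm A1) ^ Suc j * norm u0 * exp (s * ?\<nu>) * s ^ j / fact j"
    by (simp add: power_mult_distrib mult_ac)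
  finally show "norm (\<epsilon> ^ Suc j *s (A1 *v duhamel_coeff A0 A1 u0 j s))
      \<le> (cmod \<epsilon> * mnorm A1) ^ Suc j * norm u0 * exp (s * ?\<nu>) * s ^ j / fact j" .
qed (rule taylor_remainder_Suc_0)

lemma sums_duhamel_coeff:
  assumes "0 \<le> T"
  shows "(\<lambda>l. \<epsilon> ^ l *s duhamel_coeff A0 A1 u0 l T) sums usol A0 A1 u0 T \<epsilon>"
proof -
  define x where "x = cmod \<epsilon> * mnorm A1 * T"
  define C where "C = norm u0 * exp (T * (lognorm A0 + cmod \<epsilon> * mnorm A1))"
  have "(\<lambda>n. inverse (fact n) * x ^ n) \<longlonglongrightarrow> 0"
    by (rule summable_LIMSEQ_zero[OF summable_exp])
  then have "(\<lambda>n. x ^ n / fact n) \<longlonglongrightarrow> 0"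
    by (simp only: divide_inverse_commute)
  then have "(\<lambda>n. x ^ Suc n / fact (Suc n)) \<longlonglongrightarrow> 0"
    by (rule LIMSEQ_Suc)
  then have bound_tendsto: "(\<lambda>n. C * (x ^ Suc n / fact (Suc n))) \<longlonglongrightarrow> 0"
    by (rule tendsto_mult_right_zero)
  have "\<forall>n. norm (taylor_remainder A0 A1 u0 \<epsilon> (Suc n) T) \<le> C * (x ^ Suc n / fact (Suc n))"
    using norm_taylor_remainder_le[OF assms, of A0 A1 u0 \<epsilon>]
    by (simp add: C_def x_def power_mult_distrib mult_ac del: power_Suc fact_Suc)
  from Lim_null_comparison[OF always_eventually[OF this] bound_tendsto]
  have "(\<lambda>n. taylor_remainder A0 A1 u0 \<epsilon> (Suc n) T) \<longlonglongrightarrow> 0" .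
  then have "(\<lambda>n. usol A0 A1 u0 T \<epsilon> - taylor_remainder A0 A1 u0 \<epsilon> n T) \<longlonglongrightarrow> usol A0 A1 u0 T \<epsilon> - 0"
    by (intro tendsto_diff tendsto_const) (rule LIMSEQ_imp_Suc)
  then show ?thesis
    by (simp add: sums_def taylor_remainder_def)
qed

lemma power_series_zero_imp_coeff_zero:
  fixes a :: "nat \<Rightarrow> complex"
  assumes "\<And>z. (\<lambda>n. a n * z ^ n) sums 0"
  shows "a m = 0"
proof (induction m rule: less_induct)
  case (less m)
  have shifted: "(\<lambda>n. a (n + m) * z ^ n) sums 0" if "z \<noteq> 0" for z
  proof -
    have "(\<lambda>n. a n * z ^ n) sums (0 + (\<Sum>i<m. a i * z ^ i))"
      using assms[of z] less.IH by simp
    then have "(\<lambda>n. a (n + m) * z ^ (n + m)) sums 0"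
      by (rule sums_iff_shift[THEN iffD2])
    from sums_mult[OF this, of "inverse (z ^ m)"] that show ?thesis
      by (simp add: power_add field_simps)
  qed
  have "((\<lambda>z. 0) \<longlongrightarrow> a (0 + m)) (at (0 :: complex))"
    using powser_limit_0_strong[where s=1 and a="\<lambda>n. a (n + m)" and f="\<lambda>z. 0"] shifted
    by simp
  then show ?case
    using tendsto_unique[OF at_neq_bot _ tendsto_const] by simp
qed

lemma power_series_vec_coeff_unique:
  fixes c d :: "nat \<Rightarrow> complex ^ 'n"
  assumes "\<And>z. (\<lambda>l. z ^ l *s c l) sums f z" and "\<And>z. (\<lambda>l. z ^ l *s d l) sums f z"
  shows "c = d"
proof (intro ext iffD2[OF vec_eq_iff] allI)
  fix l i
  have "(\<lambda>n. (c n $ i - d n $ i) * z ^ n) sums 0" for z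
    using sums_vec_nth[OF sums_diff[OF assms(1,2)[of z]], of i] by (simp add: algebra_simps)
  from power_series_zero_imp_coeff_zero[OF this] show "c l $ i = d l $ i"
    by simp
qed

lemma taylor_coeff_eq_duhamel_coeff:
  assumes "0 \<le> t"
  shows "taylor_coeff A0 A1 u0 t = (\<lambda>l. duhamel_coeff A0 A1 u0 l t)"
  unfolding taylor_coeff_def
proof (rule the_equality)
  show "\<forall>\<epsilon>. (\<lambda>l. \<epsilon> ^ l *s duhamel_coeff A0 A1 u0 l t) sums usol A0 A1 u0 t \<epsilon>"
    using sums_duhamel_coeff[OF assms] by blast
  fix c assume "\<forall>\<epsilon>. (\<lambda>l. \<epsilon> ^ l *s c l) sums usol A0 A1 u0 t \<epsilon>"
  with sums_duhamel_coeff[OF assms] show "c = (\<lambda>l. duhamel_coeff A0 A1 u0 l t)"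
    by (intro power_series_vec_coeff_unique[where f = "usol A0 A1 u0 t"]) auto
qed

theorem mainTheorem6:
  fixes A0 A1 :: "complex^'n^'n" and u0 :: "complex^'n" and t :: real
    and \<epsilon> :: complex and k :: nat
  assumes "t \<ge> 0" and "k \<ge> 1"
  shows "norm (usol A0 A1 u0 t \<epsilon> - (\<Sum>l<k. (\<epsilon> ^ l) *s taylor_coeff A0 A1 u0 t l))
    \<le> exp (t * (lognorm A0 + cmod \<epsilon> * mnorm A1)) * (cmod \<epsilon> * mnorm (mscale (of_real t) A1)) ^ k
       / fact k * norm u0"
proof -
  obtain j where k: "k = Suc j"
    using \<open>k \<ge> 1\<close> by (cases k) auto
  have "usol A0 A1 u0 t \<epsilon> - (\<Sum>l<k. (\<epsilon> ^ l) *s taylor_coeff A0 A1 u0 t l)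
      = taylor_remainder A0 A1 u0 \<epsilon> k t"
    by (simp add: taylor_remainder_def taylor_coeff_eq_duhamel_coeff[OF \<open>t \<ge> 0\<close>])
  moreover have "mnorm (mscale (of_real t) A1) = t * mnorm A1"
    using \<open>t \<ge> 0\<close> by (simp add: mnorm_mscale_of_real)
  ultimately show ?thesis
    using norm_taylor_remainder_le[OF \<open>t \<ge> 0\<close>, of A0 A1 u0 \<epsilon> j]
    by (simp add: k power_mult_distrib field_simps)
qed

end
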